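(* Let $\psi\in\Psi$ and let $\tau_\omega$ be a Dixmier trace on $M_\psi$. Then for every positive $x\in M_\psi$, $$\tau_\omega(x)\le\omega\Big(t\mapsto\frac{-1}{\psi(t)}\int_{1/t}^\infty\lambda\,dn_x(\lambda)\Big).$$
   Context: $\Psi$ is the class of concave increasing functions $\psi$ on $[0,\infty)$ with $\psi(\infty)=\infty$, $\psi(t)=O(t)$ as $t\to0$, $\psi(t)=o(t)$ as $t\to\infty$. For bounded measurable $x$ on $(0,\infty)$, $n_x(\lambda)=m(\{s:|x(s)|>\lambda\})$, $x^*$ is the nonincreasing right-continuous rearrangement of $|x|$, and $-\int_z^\infty\lambda\,dn_x(\lambda)=\int_0^{n_x(z)}x^*(s)ds$. $M_\psi$ is the space of bounded measurable $x$ with $\sup_{t>0}\frac1{\psi(t)}\int_0^tx^*(s)ds<\infty$. A dilation invariant generalised limit is a positive linear functional $\omega$ on $L_\infty(0,\infty)$ with $\omega(1)=1$, $\omega(y)=0$ whenever $y(t)\to0$, and $\omega(\sigma_ny)=\omega(y)$ for $n\in\mathbb{N}$, $(\sigma_ny)(t)=y(t/n)$. $\tau_\omega(x)=\omega(t\mapsto\frac1{\psi(t)}\int_0^tx^*(s)ds)$ for $0\le x\in M_\psi$ is called a Dixmier trace if it is additive on the positive cone. Values of functions of $t$ on a bounded initial interval do not affect $\omega$. *)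

theory Defs
  imports "HOL-Analysis.Analysis" "HOL-Library.Landau_Symbols"
begin

definition Psi_class :: "(real \<Rightarrow> real) set" where
  "Psi_class = {psi. concave_on {0..} psi \<and> mono_on {0..} psi
      \<and> filterlim psi at_top at_top
      \<and> psi \<in> O[at_right 0](\<lambda>t. t)
      \<and> psi \<in> o[at_top](\<lambda>t. t)}"

text \<open>Functions on (0,infinity): only their values on (0,infinity) matter.\<close>
definition bdd_meas :: "(real \<Rightarrow> real) set" where
  "bdd_meas = {x. x \<in> borel_measurable (restrict_space lborel {0<..})
                 \<and> (\<exists>C. \<forall>s>0. \<bar>x s\<bar> \<le> C)}"

definition distf :: "(real \<Rightarrow> real) \<Rightarrow> real \<Rightarrow> ennreal" where
  "distf x lam = emeasure lborel {s. 0 < s \<and> lam < \<bar>x s\<bar>}"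

definition xstar :: "(real \<Rightarrow> real) \<Rightarrow> real \<Rightarrow> real" where
  "xstar x t = Inf {lam. 0 \<le> lam \<and> distf x lam \<le> ennreal t}"

definition M_psi :: "(real \<Rightarrow> real) \<Rightarrow> (real \<Rightarrow> real) set" where
  "M_psi psi = {x. x \<in> bdd_meas \<and>
      bdd_above ((\<lambda>t. (1 / psi t) * (LBINT s:{0..t}. xstar x s)) ` {0<..})}"

text \<open>L_infinity(0,infinity) (representatives).\<close>
definition Linfty :: "(real \<Rightarrow> real) set" where
  "Linfty = {y. y \<in> borel_measurable (restrict_space lborel {0<..})
                 \<and> (\<exists>C. AE t in lborel. 0 < t \<longrightarrow> \<bar>y t\<bar> \<le> C)}"

definition dilation_invariant_limit :: "((real \<Rightarrow> real) \<Rightarrow> real) \<Rightarrow> bool" where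
  "dilation_invariant_limit omega \<longleftrightarrow>
     (\<forall>y\<in>Linfty. \<forall>z\<in>Linfty. \<forall>a b::real.
         omega (\<lambda>t. a * y t + b * z t) = a * omega y + b * omega z)
   \<and> (\<forall>y\<in>Linfty. (AE t in lborel. 0 < t \<longrightarrow> 0 \<le> y t) \<longrightarrow> 0 \<le> omega y)
   \<and> omega (\<lambda>t. 1) = 1
   \<and> (\<forall>y\<in>Linfty. (y \<longlongrightarrow> 0) at_top \<longrightarrow> omega y = 0)
   \<and> (\<forall>y\<in>Linfty. \<forall>n::nat. 1 \<le> n \<longrightarrow> omega (\<lambda>t. y (t / real n)) = omega y)"

definition tau :: "(real \<Rightarrow> real) \<Rightarrow> ((real \<Rightarrow> real) \<Rightarrow> real) \<Rightarrow> (real \<Rightarrow> real) \<Rightarrow> real" where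
  "tau psi omega x = omega (\<lambda>t. (1 / psi t) * (LBINT s:{0..t}. xstar x s))"

definition dixmier_trace :: "(real \<Rightarrow> real) \<Rightarrow> ((real \<Rightarrow> real) \<Rightarrow> real) \<Rightarrow> bool" where
  "dixmier_trace psi omega \<longleftrightarrow>
     (\<forall>x\<in>M_psi psi. \<forall>y\<in>M_psi psi. (\<forall>s>0. 0 \<le> x s) \<longrightarrow> (\<forall>s>0. 0 \<le> y s) \<longrightarrow>
        tau psi omega (\<lambda>s. x s + y s) = tau psi omega x + tau psi omega y)"

text \<open>The Stieltjes tail  - int_z^infinity lambda dn_x(lambda), given via the identity
  - int_z^infinity lambda dn_x(lambda) = int_0^{n_x(z)} x^*(s) ds.\<close>
definition stieltjes_tail :: "(real \<Rightarrow> real) \<Rightarrow> real \<Rightarrow> real" where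
  "stieltjes_tail x z = (LBINT s:{0..enn2real (distf x z)}. xstar x s)"

end

theory Submission
  imports Defs
begin

text \<open>Put \<open>F(t) = \<integral>\<^sub>0\<^sup>t x\<^sup>*\<close> and \<open>N = n\<^sub>x(1/t)\<close>. Beyond \<open>N\<close> the rearrangement
  is at most \<open>1/t\<close>, so \<open>F(t) \<le> F(N) + 1\<close>, and \<open>F(N)\<close> is exactly the Stieltjes tail at \<open>1/t\<close>
  (\<open>N\<close> is finite because \<open>F = O(\<psi>) = o(t)\<close>). Dividing by \<open>\<psi>(t)\<close>, the mean \<open>F(t)/\<psi>(t)\<close>
  exceeds the tail ratio by at most \<open>1/\<psi>(t) \<rightarrow> 0\<close> for large \<open>t\<close>; since \<open>\<omega>\<close> is positive,
  linear and vanishes on functions tending to \<open>0\<close>, it ignores both this error and any bounded initial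
  interval. The mean is bounded, so the tail ratio may be truncated at a bound for it.\<close>

lemma bdd_measE:
  assumes "x \<in> bdd_meas"
  obtains C where "0 \<le> C" "\<And>s. 0 < s \<Longrightarrow> \<bar>x s\<bar> \<le> C"
proof -
  obtain C where "\<forall>s>0. \<bar>x s\<bar> \<le> C" using assms by (auto simp: bdd_meas_def)
  then show ?thesis using that[of "max C 0"] by force
qed

lemma distf_set_sets_lborel:
  assumes "x \<in> bdd_meas"
  shows "{s. 0 < s \<and> lam < \<bar>x s\<bar>} \<in> sets lborel"
proof -
  have "x \<in> borel_measurable (restrict_space lborel {0<..})"
    using assms by (simp add: bdd_meas_def)
  then have "{s \<in> space (restrict_space lborel {0<..}). lam < \<bar>x s\<bar>} \<in> sets (restrict_space lborel {0<..})"
    by measurable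
  moreover have "{s \<in> space (restrict_space lborel {0<..}). lam < \<bar>x s\<bar>} = {s. 0 < s \<and> lam < \<bar>x s\<bar>}"
    by (auto simp: space_restrict_space)
  ultimately show ?thesis
    by (subst (asm) sets_restrict_space_iff) auto
qed

lemma distf_antimono:
  assumes "x \<in> bdd_meas" "a \<le> b"
  shows "distf x b \<le> distf x a"
  unfolding distf_def
  by (rule emeasure_mono) (use assms distf_set_sets_lborel in auto)

lemma distf_eq_0:
  assumes "\<And>s. 0 < s \<Longrightarrow> \<bar>x s\<bar> \<le> C"
  shows "distf x C = 0"
proof -
  have "{s. 0 < s \<and> C < \<bar>x s\<bar>} = {}" using assms by force
  then show ?thesis unfolding distf_def by (metis emeasure_empty)
qed

lemma xstar_le:
  assumes "0 \<le> lam" "distf x lam \<le> ennreal t"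
  shows "xstar x t \<le> lam"
  unfolding xstar_def by (rule cInf_lower) (use assms in \<open>auto intro: bdd_belowI[of _ 0]\<close>)

lemma xstar_le_bound:
  assumes "0 \<le> C" "\<And>s. 0 < s \<Longrightarrow> \<bar>x s\<bar> \<le> C"
  shows "xstar x t \<le> C"
  using assms by (intro xstar_le) (simp_all add: distf_eq_0)

lemma xstar_defining_set_nonempty:
  assumes "x \<in> bdd_meas"
  shows "{lam. 0 \<le> lam \<and> distf x lam \<le> ennreal t} \<noteq> {}"
proof -
  obtain C where "0 \<le> C" "\<And>s. 0 < s \<Longrightarrow> \<bar>x s\<bar> \<le> C" using bdd_measE[OF assms] by blast
  then show ?thesis by (auto simp: distf_eq_0)
qed

lemma xstar_nonneg:
  assumes "x \<in> bdd_meas"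
  shows "0 \<le> xstar x t"
  unfolding xstar_def
  by (rule cInf_greatest) (use xstar_defining_set_nonempty[OF assms] in auto)

lemma xstar_antimono:
  assumes "x \<in> bdd_meas" "a \<le> b"
  shows "xstar x b \<le> xstar x a"
  unfolding xstar_def
  by (rule cInf_superset_mono) (use xstar_defining_set_nonempty[OF assms(1)] assms(2) in
      \<open>auto intro: bdd_belowI[of _ 0] order.trans ennreal_leI\<close>)

lemma xstar_ge_if_distf_infinite:
  assumes "x \<in> bdd_meas" "distf x lam = \<infinity>"
  shows "lam \<le> xstar x t"
  unfolding xstar_def
proof (rule cInf_greatest)
  show "{lam. 0 \<le> lam \<and> distf x lam \<le> ennreal t} \<noteq> {}"
    by (rule xstar_defining_set_nonempty[OF assms(1)])
next
  fix mu assume mu: "mu \<in> {lam. 0 \<le> lam \<and> distf x lam \<le> ennreal t}"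
  show "lam \<le> mu"
  proof (rule ccontr)
    assume "\<not> lam \<le> mu"
    then have "distf x lam \<le> distf x mu" by (intro distf_antimono[OF assms(1)]) auto
    with assms(2) mu show False by (simp add: top_unique)
  qed
qed

lemma borel_measurable_xstar:
  assumes "x \<in> bdd_meas"
  shows "xstar x \<in> borel_measurable lborel"
proof -
  have "mono (\<lambda>t. - xstar x t)" using xstar_antimono[OF assms] by (auto simp: mono_def)
  then have "(\<lambda>t. - xstar x t) \<in> borel_measurable borel" by (rule borel_measurable_mono)
  then have "(\<lambda>t. - (- xstar x t)) \<in> borel_measurable borel" by measurable
  then show ?thesis by simp
qed

lemma set_integrable_xstar:
  assumes "x \<in> bdd_meas" "A \<in> sets lborel" "A \<subseteq> {a..b}"
  shows "set_integrable lborel A (xstar x)"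
proof -
  obtain C where C: "0 \<le> C" "\<And>s. 0 < s \<Longrightarrow> \<bar>x s\<bar> \<le> C" using bdd_measE[OF assms(1)] by blast
  have "emeasure lborel A \<le> emeasure lborel {a..b}" using assms by (intro emeasure_mono) auto
  then have "emeasure lborel A < \<infinity>" by (simp add: emeasure_lborel_Icc_eq le_less_trans)
  then show ?thesis unfolding set_integrable_def
    by (intro integrableI_bounded_set_indicator[where B=C])
       (use assms borel_measurable_xstar xstar_le_bound[OF C] xstar_nonneg in auto)
qed

definition xstar_integral :: "(real \<Rightarrow> real) \<Rightarrow> real \<Rightarrow> real" where
  "xstar_integral x t = (LBINT s:{0..t}. xstar x s)"

lemma xstar_integral_nonneg:
  assumes "x \<in> bdd_meas"
  shows "0 \<le> xstar_integral x t"
  unfolding xstar_integral_def set_lebesgue_integral_def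
  by (rule Bochner_Integration.integral_nonneg) (auto simp: xstar_nonneg[OF assms] indicator_def)

lemma xstar_integral_split:
  assumes "x \<in> bdd_meas" "0 \<le> a" "a \<le> b"
  shows "xstar_integral x b = xstar_integral x a + (LBINT s:{a<..b}. xstar x s)"
proof -
  have "{0..b} = {0..a} \<union> {a<..b}" using assms by auto
  then show ?thesis unfolding xstar_integral_def
    by (simp only:) (rule set_integral_Un, auto intro!: set_integrable_xstar assms(1))
qed

lemma xstar_integral_mono:
  assumes "x \<in> bdd_meas" "0 \<le> a" "a \<le> b"
  shows "xstar_integral x a \<le> xstar_integral x b"
proof -
  have "0 \<le> (LBINT s:{a<..b}. xstar x s)"
    unfolding set_lebesgue_integral_def
    by (rule Bochner_Integration.integral_nonneg) (auto simp: xstar_nonneg[OF assms(1)] indicator_def)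
  then show ?thesis using xstar_integral_split[OF assms] by simp
qed

lemma xstar_integral_le_increment:
  assumes "x \<in> bdd_meas" "0 \<le> a" "a \<le> b" "\<And>s. a < s \<Longrightarrow> s \<le> b \<Longrightarrow> xstar x s \<le> c"
  shows "xstar_integral x b \<le> xstar_integral x a + (b - a) * c"
proof -
  have "set_integrable lborel {a<..b} (xstar x)" by (rule set_integrable_xstar[OF assms(1), of _ a b]) auto
  then have "(LBINT s:{a<..b}. xstar x s) \<le> (LBINT s:{a<..b}. c)"
    by (rule set_integral_mono) (use assms in \<open>auto simp: set_integrable_def\<close>)
  also have "\<dots> = (b - a) * c" using assms by (subst set_integral_const) auto
  finally show ?thesis using xstar_integral_split[OF assms(1-3)] by simp
qed

lemma xstar_integral_ge:
  assumes "x \<in> bdd_meas" "0 \<le> b" "\<And>s. 0 \<le> s \<Longrightarrow> s \<le> b \<Longrightarrow> c \<le> xstar x s"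
  shows "b * c \<le> xstar_integral x b"
proof -
  have "b * c = (LBINT s:{0..b}. c)" using assms by (subst set_integral_const) auto
  also have "\<dots> \<le> xstar_integral x b" unfolding xstar_integral_def
    by (rule set_integral_mono[OF _ set_integrable_xstar[OF assms(1)]])
       (use assms in \<open>auto simp: set_integrable_def\<close>)
  finally show ?thesis .
qed


lemma stieltjes_tail_eq: "stieltjes_tail x z = xstar_integral x (enn2real (distf x z))"
  by (simp add: stieltjes_tail_def xstar_integral_def)

lemma xstar_integral_le_stieltjes_tail:
  assumes "x \<in> bdd_meas" "0 < t" "distf x (1 / t) \<noteq> \<infinity>"
  shows "xstar_integral x t \<le> stieltjes_tail x (1 / t) + 1"
proof -
  define N where "N = enn2real (distf x (1 / t))"
  have N: "0 \<le> N" "distf x (1 / t) = ennreal N"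
    using assms(3) by (auto simp: N_def ennreal_enn2real_if top.not_eq_extremum)
  have small: "xstar x s \<le> 1 / t" if "N \<le> s" for s
    by (rule xstar_le) (use N that assms(2) in auto)
  have "xstar_integral x t \<le> xstar_integral x N + 1"
  proof (cases "t \<le> N")
    case True
    then show ?thesis using xstar_integral_mono[OF assms(1), of t N] assms(2) by simp
  next
    case False
    then have "xstar_integral x t \<le> xstar_integral x N + (t - N) * (1 / t)"
      by (intro xstar_integral_le_increment[OF assms(1)]) (use N small in auto)
    also have "(t - N) * (1 / t) \<le> 1" using assms(2) N by (simp add: field_simps)
    finally show ?thesis by simp
  qed
  then show ?thesis by (simp add: stieltjes_tail_eq N_def)
qed

lemma mono_on_stieltjes_tail_inverse:
  assumes "x \<in> bdd_meas" "\<And>lam. 0 < lam \<Longrightarrow> distf x lam \<noteq> \<infinity>"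
  shows "mono_on {0<..} (\<lambda>t. stieltjes_tail x (1 / t))"
proof (rule mono_onI)
  fix a b :: real assume ab: "a \<in> {0<..}" "b \<in> {0<..}" "a \<le> b"
  have "distf x (1 / a) \<le> distf x (1 / b)"
    by (rule distf_antimono[OF assms(1)]) (use ab in \<open>auto simp: field_simps\<close>)
  then have "enn2real (distf x (1 / a)) \<le> enn2real (distf x (1 / b))"
    by (rule enn2real_mono) (use assms(2)[of "1 / b"] ab in \<open>auto simp: top.not_eq_extremum\<close>)
  then show "stieltjes_tail x (1 / a) \<le> stieltjes_tail x (1 / b)"
    unfolding stieltjes_tail_eq by (rule xstar_integral_mono[OF assms(1) enn2real_nonneg])
qed

lemma borel_measurable_mono_on_pos:
  fixes f :: "real \<Rightarrow> real"
  assumes "mono_on {0<..} f"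
  shows "f \<in> borel_measurable (restrict_space lborel {0<..})"
  using borel_measurable_mono_on_fnc[OF assms]
    measurable_cong_sets[OF sets_restrict_space_cong[OF sets_lborel] refl, of "{0<..}::real set" "borel::real measure"]
  by simp

lemma Psi_tendsto_0:
  assumes "psi \<in> Psi_class"
  shows "(psi \<longlongrightarrow> 0) (at_right 0)"
proof -
  have "(\<lambda>t::real. t) \<in> o[at_right 0](\<lambda>_. 1)"
    by (rule smalloI_tendsto) (auto intro!: tendsto_eq_intros)
  then have "psi \<in> o[at_right 0](\<lambda>_. 1)"
    using assms by (auto simp: Psi_class_def intro: landau_o.big_small_trans)
  then show ?thesis using smalloD_tendsto by fastforce
qed

lemma Psi_nonneg:
  assumes "psi \<in> Psi_class" "0 < t"
  shows "0 \<le> psi t"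
proof (rule tendsto_upperbound[OF Psi_tendsto_0[OF assms(1)]])
  have "mono_on {0..} psi" using assms(1) by (simp add: Psi_class_def)
  then show "\<forall>\<^sub>F s in at_right 0. psi s \<le> psi t"
    unfolding eventually_at_right_field
    using assms(2) by (intro exI[of _ t]) (auto elim: mono_onD)
qed simp

lemma borel_measurable_Psi:
  assumes "psi \<in> Psi_class"
  shows "psi \<in> borel_measurable (restrict_space lborel {0<..})"
  using assms by (intro borel_measurable_mono_on_pos) (auto simp: Psi_class_def mono_on_def)

lemma Psi_eventually_ge:
  assumes "psi \<in> Psi_class"
  shows "\<forall>\<^sub>F t in at_top. c \<le> psi t"
  using assms by (simp add: Psi_class_def filterlim_at_top)

definition xstar_mean :: "(real \<Rightarrow> real) \<Rightarrow> (real \<Rightarrow> real) \<Rightarrow> real \<Rightarrow> real" where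
  "xstar_mean psi x t = (1 / psi t) * (LBINT s:{0..t}. xstar x s)"

lemma tau_eq_omega_xstar_mean: "tau psi omega x = omega (xstar_mean psi x)"
  by (simp add: tau_def xstar_mean_def[abs_def])

lemma xstar_mean_eq: "xstar_mean psi x t = xstar_integral x t / psi t"
  by (simp add: xstar_mean_def xstar_integral_def)

lemma xstar_mean_nonneg:
  assumes "psi \<in> Psi_class" "x \<in> bdd_meas" "0 < t"
  shows "0 \<le> xstar_mean psi x t"
  using Psi_nonneg[OF assms(1,3)] xstar_integral_nonneg[OF assms(2)] by (simp add: xstar_mean_eq)

lemma M_psi_xstar_mean_bounded:
  assumes "x \<in> M_psi psi"
  obtains n :: nat where "\<And>t. 0 < t \<Longrightarrow> xstar_mean psi x t \<le> real n"
proof -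
  obtain B where "\<And>t. 0 < t \<Longrightarrow> xstar_mean psi x t \<le> B"
    using assms unfolding M_psi_def bdd_above_def xstar_mean_def by auto
  then show ?thesis using that[of "nat \<lceil>B\<rceil>"] by (meson real_nat_ceiling_ge order.trans)
qed

text \<open>Otherwise \<open>x\<^sup>* \<ge> \<lambda>\<close> everywhere, so \<open>\<integral>\<^sub>0\<^sup>t x\<^sup>* \<ge> \<lambda> t\<close>, against
  \<open>\<integral>\<^sub>0\<^sup>t x\<^sup>* = O(\<psi>(t)) = o(t)\<close>.\<close>
lemma M_psi_distf_finite:
  assumes psi: "psi \<in> Psi_class" and x: "x \<in> M_psi psi" and lam: "0 < lam"
  shows "distf x lam \<noteq> \<infinity>"
proof
  assume inf: "distf x lam = \<infinity>"
  have xb: "x \<in> bdd_meas" using x by (simp add: M_psi_def)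
  obtain n :: nat where n: "\<And>t. 0 < t \<Longrightarrow> xstar_mean psi x t \<le> real n"
    using M_psi_xstar_mean_bounded[OF x] by blast
  define eps where "eps = lam / (2 * (real n + 1))"
  have "eps > 0" using lam by (simp add: eps_def)
  then have "\<forall>\<^sub>F t in at_top. \<bar>psi t\<bar> \<le> eps * \<bar>t\<bar>"
    using psi landau_o.smallD by (fastforce simp: Psi_class_def)
  moreover have "\<forall>\<^sub>F t in at_top. 1 \<le> psi t" by (rule Psi_eventually_ge[OF psi])
  moreover have "\<forall>\<^sub>F t in at_top. (0::real) < t" by simp
  ultimately obtain t where t: "\<bar>psi t\<bar> \<le> eps * \<bar>t\<bar>" "1 \<le> psi t" "0 < t"
    using eventually_happens by (metis (mono_tags, lifting) eventually_conj_iff trivial_limit_at_top_linorder)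
  have "t * lam \<le> xstar_integral x t"
    by (rule xstar_integral_ge[OF xb]) (use t xstar_ge_if_distf_infinite[OF xb inf] in auto)
  also have "\<dots> \<le> real n * psi t"
    using n[OF t(3)] t(2) by (simp add: xstar_mean_eq field_simps)
  also have "\<dots> \<le> real n * (eps * t)" using t by (intro mult_left_mono) auto
  also have "\<dots> < t * lam"
  proof -
    have "real n * eps < lam"
      using lam by (simp add: eps_def field_simps) (simp add: distrib_left[symmetric])
    then show ?thesis using t(3) by (simp add: mult.assoc[symmetric] mult.commute[of t])
  qed
  finally show False by simp
qed


lemma xstar_mean_eventually_le_tail:
  assumes psi: "psi \<in> Psi_class" and x: "x \<in> M_psi psi"
    and bound: "\<And>t. 0 < t \<Longrightarrow> xstar_mean psi x t \<le> c"
  shows "\<forall>\<^sub>F t in at_top.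
           xstar_mean psi x t \<le> min (stieltjes_tail x (1 / t) / psi t) c + 1 / max 1 (psi t)"
  using Psi_eventually_ge[OF psi, of 1] eventually_gt_at_top[of 0]
proof eventually_elim
  case (elim t)
  have xb: "x \<in> bdd_meas" using x by (simp add: M_psi_def)
  have "xstar_integral x t \<le> stieltjes_tail x (1 / t) + 1"
    using elim(2) by (intro xstar_integral_le_stieltjes_tail[OF xb] M_psi_distf_finite[OF psi x]) auto
  then have "xstar_mean psi x t \<le> stieltjes_tail x (1 / t) / psi t + 1 / psi t"
    unfolding xstar_mean_eq add_divide_distrib[symmetric] using elim(1) by (intro divide_right_mono) auto
  moreover have "xstar_mean psi x t \<le> c" using bound elim(2) by simp
  moreover have "0 \<le> 1 / psi t" using elim(1) by simp
  moreover have "max 1 (psi t) = psi t" using elim(1) by simp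
  ultimately show ?case by linarith
qed

lemma LinftyI:
  assumes "y \<in> borel_measurable (restrict_space lborel {0<..})" "\<And>t. 0 < t \<Longrightarrow> \<bar>y t\<bar> \<le> C"
  shows "y \<in> Linfty"
  unfolding Linfty_def using assms by (auto intro!: exI[of _ C])

lemma Linfty_lincomb:
  assumes "y \<in> Linfty" "z \<in> Linfty"
  shows "(\<lambda>t. a * y t + b * z t) \<in> Linfty"
proof -
  obtain C D where "AE t in lborel. 0 < t \<longrightarrow> \<bar>y t\<bar> \<le> C" "AE t in lborel. 0 < t \<longrightarrow> \<bar>z t\<bar> \<le> D"
    using assms by (auto simp: Linfty_def)
  then have "AE t in lborel. 0 < t \<longrightarrow> \<bar>a * y t + b * z t\<bar> \<le> \<bar>a\<bar> * C + \<bar>b\<bar> * D"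
  proof eventually_elim
    case (elim t)
    show ?case
    proof
      assume "0 < t"
      with elim have bounds: "\<bar>y t\<bar> \<le> C" "\<bar>z t\<bar> \<le> D" by auto
      have "\<bar>a * y t + b * z t\<bar> \<le> \<bar>a\<bar> * \<bar>y t\<bar> + \<bar>b\<bar> * \<bar>z t\<bar>"
        by (metis abs_mult abs_triangle_ineq)
      also have "\<dots> \<le> \<bar>a\<bar> * C + \<bar>b\<bar> * D" using bounds by (intro add_mono mult_left_mono) auto
      finally show "\<bar>a * y t + b * z t\<bar> \<le> \<bar>a\<bar> * C + \<bar>b\<bar> * D" .
    qed
  qed
  then show ?thesis using assms by (auto simp: Linfty_def)
qed

lemma Linfty_add: "y \<in> Linfty \<Longrightarrow> z \<in> Linfty \<Longrightarrow> (\<lambda>t. y t + z t) \<in> Linfty"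
  using Linfty_lincomb[of y z 1 1] by simp

lemma Linfty_diff: "y \<in> Linfty \<Longrightarrow> z \<in> Linfty \<Longrightarrow> (\<lambda>t. y t - z t) \<in> Linfty"
  using Linfty_lincomb[of y z 1 "-1"] by simp

lemma Linfty_truncate:
  assumes "y \<in> Linfty"
  shows "(\<lambda>t. if t < T then y t else 0) \<in> Linfty"
proof -
  obtain C where "AE t in lborel. 0 < t \<longrightarrow> \<bar>y t\<bar> \<le> C" and ym: "y \<in> borel_measurable (restrict_space lborel {0<..})"
    using assms by (auto simp: Linfty_def)
  then have "AE t in lborel. 0 < t \<longrightarrow> \<bar>if t < T then y t else 0\<bar> \<le> max C 0" by eventually_elim auto
  moreover have "(\<lambda>t::real. t) \<in> borel_measurable (restrict_space lborel {0<..})"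
    by (rule measurable_restrict_space1) simp
  then have "(\<lambda>t. if t < T then y t else 0) \<in> borel_measurable (restrict_space lborel {0<..})"
    using ym by measurable
  ultimately show ?thesis unfolding Linfty_def by blast
qed

lemma dilation_invariant_limit_add:
  assumes "dilation_invariant_limit omega" "y \<in> Linfty" "z \<in> Linfty"
  shows "omega (\<lambda>t. y t + z t) = omega y + omega z"
proof -
  have "\<forall>y\<in>Linfty. \<forall>z\<in>Linfty. \<forall>a b::real. omega (\<lambda>t. a * y t + b * z t) = a * omega y + b * omega z"
    using assms(1) by (simp add: dilation_invariant_limit_def)
  from this[rule_format, OF assms(2,3), of 1 1] show ?thesis by simp
qed

lemma dilation_invariant_limit_tendsto_0:
  assumes "dilation_invariant_limit omega" "y \<in> Linfty" "(y \<longlongrightarrow> 0) at_top"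
  shows "omega y = 0"
  using assms by (simp add: dilation_invariant_limit_def)

lemma dilation_invariant_limit_mono:
  assumes omega: "dilation_invariant_limit omega" and "y \<in> Linfty" "z \<in> Linfty"
    and le: "\<And>t. 0 < t \<Longrightarrow> y t \<le> z t"
  shows "omega y \<le> omega z"
proof -
  have "\<forall>y\<in>Linfty. \<forall>z\<in>Linfty. \<forall>a b::real. omega (\<lambda>t. a * y t + b * z t) = a * omega y + b * omega z"
    using omega by (simp add: dilation_invariant_limit_def)
  from this[rule_format, OF assms(3,2), of 1 "-1"] have "omega (\<lambda>t. z t - y t) = omega z - omega y"
    by simp
  moreover have "0 \<le> omega (\<lambda>t. z t - y t)"
    using omega Linfty_diff[OF assms(3,2)] le by (simp add: dilation_invariant_limit_def)
  ultimately show ?thesis by simp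
qed

lemma dilation_invariant_limit_mono_eventually:
  assumes omega: "dilation_invariant_limit omega" and y: "y \<in> Linfty" and z: "z \<in> Linfty"
    and le: "\<forall>\<^sub>F t in at_top. y t \<le> z t"
  shows "omega y \<le> omega z"
proof -
  obtain T where T: "\<And>t. T \<le> t \<Longrightarrow> y t \<le> z t" using le by (auto simp: eventually_at_top_linorder)
  define d where "d t = (if t < T then y t - z t else 0)" for t
  have d: "d \<in> Linfty" unfolding d_def by (intro Linfty_truncate Linfty_diff y z)
  have "omega y \<le> omega (\<lambda>t. z t + d t)"
    by (rule dilation_invariant_limit_mono[OF omega y Linfty_add[OF z d]]) (use T in \<open>auto simp: d_def\<close>)
  also have "\<dots> = omega z + omega d" by (rule dilation_invariant_limit_add[OF omega z d])
  also have "omega d = 0"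
  proof (rule dilation_invariant_limit_tendsto_0[OF omega d])
    have "\<forall>\<^sub>F t in at_top. d t = 0" using eventually_ge_at_top[of T] by eventually_elim (simp add: d_def)
    then show "(d \<longlongrightarrow> 0) at_top" by (rule tendsto_eventually)
  qed
  finally show ?thesis by simp
qed


lemma xstar_mean_Linfty:
  assumes psi: "psi \<in> Psi_class" and x: "x \<in> M_psi psi"
  shows "xstar_mean psi x \<in> Linfty"
proof -
  have xb: "x \<in> bdd_meas" using x by (simp add: M_psi_def)
  obtain n :: nat where n: "\<And>t. 0 < t \<Longrightarrow> xstar_mean psi x t \<le> real n"
    using M_psi_xstar_mean_bounded[OF x] by blast
  have "(\<lambda>t. xstar_integral x t) \<in> borel_measurable (restrict_space lborel {0<..})"
    by (rule borel_measurable_mono_on_pos) (auto simp: mono_on_def intro!: xstar_integral_mono[OF xb])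
  then have "xstar_mean psi x \<in> borel_measurable (restrict_space lborel {0<..})"
    unfolding xstar_mean_eq[abs_def] using borel_measurable_Psi[OF psi] by measurable
  then show ?thesis
    by (rule LinftyI[of _ "real n"]) (use n xstar_mean_nonneg[OF psi xb] in force)
qed

lemma truncated_tail_ratio_Linfty:
  assumes psi: "psi \<in> Psi_class" and x: "x \<in> M_psi psi" and "0 \<le> c"
  shows "(\<lambda>t. min (stieltjes_tail x (1 / t) / psi t) c) \<in> Linfty"
proof (rule LinftyI)
  have xb: "x \<in> bdd_meas" using x by (simp add: M_psi_def)
  have "(\<lambda>t. stieltjes_tail x (1 / t)) \<in> borel_measurable (restrict_space lborel {0<..})"
    by (intro borel_measurable_mono_on_pos mono_on_stieltjes_tail_inverse xb M_psi_distf_finite[OF psi x])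
  then show "(\<lambda>t. min (stieltjes_tail x (1 / t) / psi t) c) \<in> borel_measurable (restrict_space lborel {0<..})"
    using borel_measurable_Psi[OF psi] by measurable
  fix t :: real assume "0 < t"
  then have "0 \<le> stieltjes_tail x (1 / t) / psi t"
    using Psi_nonneg[OF psi] xstar_integral_nonneg[OF xb] by (simp add: stieltjes_tail_eq)
  then show "\<bar>min (stieltjes_tail x (1 / t) / psi t) c\<bar> \<le> c" using assms(3) by simp
qed

text \<open>\<open>1/\<psi>\<close> itself is unbounded near \<open>0\<close>; capping \<open>\<psi>\<close> below by \<open>1\<close> changes it only on an
  initial interval.\<close>
lemma Psi_inverse_Linfty:
  assumes "psi \<in> Psi_class"
  shows "(\<lambda>t. 1 / max 1 (psi t)) \<in> Linfty"
proof (rule LinftyI[of _ 1])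
  show "(\<lambda>t. 1 / max 1 (psi t)) \<in> borel_measurable (restrict_space lborel {0<..})"
    using borel_measurable_Psi[OF assms] by measurable
qed (simp add: abs_div)

lemma Psi_inverse_tendsto_0:
  assumes "psi \<in> Psi_class"
  shows "((\<lambda>t. 1 / max 1 (psi t)) \<longlongrightarrow> 0) at_top"
proof -
  have "filterlim (\<lambda>t. max 1 (psi t)) at_top at_top"
    using assms by (auto simp: Psi_class_def intro: filterlim_at_top_mono)
  from tendsto_inverse_0_at_top[OF this] show ?thesis by (simp add: inverse_eq_divide)
qed

theorem lemma2p6:
  fixes psi :: "real \<Rightarrow> real" and omega :: "(real \<Rightarrow> real) \<Rightarrow> real"
    and x :: "real \<Rightarrow> real"
  assumes "psi \<in> Psi_class"
    and "dilation_invariant_limit omega"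
    and "dixmier_trace psi omega"
    and "x \<in> M_psi psi"
    and "\<forall>s>0. 0 \<le> x s"
  shows "ereal (tau psi omega x)
     \<le> (SUP n::nat. ereal (omega (\<lambda>t. min (stieltjes_tail x (1 / t) / psi t) (real n))))"
proof -
  obtain n :: nat where n: "\<And>t. 0 < t \<Longrightarrow> xstar_mean psi x t \<le> real n"
    using M_psi_xstar_mean_bounded[OF assms(4)] by blast
  define G where "G t = min (stieltjes_tail x (1 / t) / psi t) (real n)" for t
  define P where "P t = 1 / max 1 (psi t)" for t
  have G: "G \<in> Linfty" unfolding G_def by (rule truncated_tail_ratio_Linfty[OF assms(1,4)]) simp
  have P: "P \<in> Linfty" unfolding P_def by (rule Psi_inverse_Linfty[OF assms(1)])
  have "tau psi omega x \<le> omega (\<lambda>t. G t + P t)"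
    unfolding tau_eq_omega_xstar_mean G_def P_def
    by (rule dilation_invariant_limit_mono_eventually[OF assms(2) xstar_mean_Linfty[OF assms(1,4)]
          Linfty_add[OF G P, unfolded G_def P_def] xstar_mean_eventually_le_tail[OF assms(1,4) n]])
  also have "\<dots> = omega G"
    using dilation_invariant_limit_add[OF assms(2) G P] Psi_inverse_tendsto_0[OF assms(1)]
      dilation_invariant_limit_tendsto_0[OF assms(2) P] by (simp add: P_def[abs_def])
  finally show ?thesis
    unfolding G_def by (intro order.trans[OF _ SUP_upper]) auto
qed

end
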